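(* Let $N\in\mathbb Z$, let $q_0,\dots,q_{T-1}\in\mathbb Z$, and let $Q_0,\dots,Q_{T-1}\in\mathbb Q$ satisfy $Q_i-Q_j\notin\mathbb Z$ for all $i\neq j$. Then the diagonal map $f\mapsto(f,\dots,f)$ induces an isomorphism of vector spaces $$\mathbb C[z,z^{-1}]\Big/\bigcap_{s=0}^{T-1}O(N,Q_s,q_s;z)\ \xrightarrow{\ \sim\ }\ \bigoplus_{s=0}^{T-1}\mathbb C[z,z^{-1}]/O(N,Q_s,q_s;z).$$
   Context: $T$ is a positive integer. For $N,q\in\mathbb Z$ and $Q\in\mathbb Q$, $O(N,Q,q;z)$ is the subspace of $\mathbb C[z,z^{-1}]$ spanned by the monomials $z^i$ with $i\ge N+1$ together with the Laurent polynomials $\sum_{i=0}^{N-q-j}\binom Qi z^{i+q+j}$ for $j=0,-1,-2,\dots$. *)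

theory Defs
  imports Complex_Main "HOL-Library.Function_Algebras" "HOL-Library.FuncSet"
begin

text \<open>Laurent polynomials in z over the complex numbers are represented as
  finitely supported coefficient functions int \<Rightarrow> complex; k \<mapsto> coefficient of z^k.\<close>

definition laurent :: "(int \<Rightarrow> complex) set" where
  "laurent = {f. finite {k. f k \<noteq> 0}}"

definition lmono :: "int \<Rightarrow> int \<Rightarrow> complex" where
  "lmono i = (\<lambda>k. if k = i then 1 else 0)"

definition cscale :: "complex \<Rightarrow> (int \<Rightarrow> complex) \<Rightarrow> (int \<Rightarrow> complex)" where
  "cscale c f = (\<lambda>k. c * f k)"

definition Opoly :: "int \<Rightarrow> rat \<Rightarrow> int \<Rightarrow> int \<Rightarrow> (int \<Rightarrow> complex)" where
  "Opoly N Q q j = (\<Sum>i\<in>{0..N - q - j}. cscale ((of_rat Q :: complex) gchoose (nat i)) (lmono (i + q + j)))"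

definition Ospace :: "int \<Rightarrow> rat \<Rightarrow> int \<Rightarrow> (int \<Rightarrow> complex) set" where
  "Ospace N Q q = module.span cscale
     ({lmono i | i. i \<ge> N + 1} \<union> {Opoly N Q q j | j. j \<le> 0})"

definition coset :: "(int \<Rightarrow> complex) set \<Rightarrow> (int \<Rightarrow> complex) \<Rightarrow> (int \<Rightarrow> complex) set" where
  "coset W f = {f + g | g. g \<in> W}"

definition quot :: "(int \<Rightarrow> complex) set \<Rightarrow> (int \<Rightarrow> complex) set \<Rightarrow> (int \<Rightarrow> complex) set set" where
  "quot V W = coset W ` V"

end

theory Submission
  imports Defs "HOL-Computational_Algebra.Polynomial_FPS"
begin

(* For a complex exponent b and an integer k let phi b k be the linear functional sending a
   Laurent polynomial f to the coefficient of z^k in f(z) (1+z)^b, i.e. sum_j f_j binom(b,k-j).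
   (1) Characterisation: O(N,Q,q) is exactly the set of Laurent polynomials killed by the
       functionals phi (-Q) k for q < k <= N.  The generators lie in this set by Vandermonde's
       identity (the generator attached to j is z^(q+j) (1+z)^Q truncated above degree N);
       conversely an element of the set is reduced to zero by peeling off its lowest
       coefficients with suitable generators.
   (2) Independence: for exponents b_s pairwise incongruent modulo the integers, the functionals
       phi b_s k (s in S, q_s < k <= N) are linearly independent on Laurent polynomials.  This
       is the linear independence of the series (1+z)^(b_s) over the polynomials, proved by
       applying the operator (1+z) d/dz - c, which lowers the degree of one polynomial factor.
   (3) A subspace of functions on a finite set with trivial annihilator consists of all
       functions; with (1) and (2) this yields simultaneous approximation (Chinese remainder
       theorem) for the subspaces O(N,Q_s,q_s).
   (4) For additive subgroups W_s, simultaneous approximation is exactly what makes the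
       diagonal map V/(intersection of the W_s) -> product of the V/W_s bijective. *)

interpretation M: module cscale
  by unfold_locales (auto simp: cscale_def fun_eq_iff algebra_simps)

section \<open>Laurent polynomials as finitely supported coefficient functions\<close>

definition supp :: "(int \<Rightarrow> complex) \<Rightarrow> int set" where
  "supp f = {j. f j \<noteq> 0}"

lemma laurent_iff: "f \<in> laurent \<longleftrightarrow> finite (supp f)"
  by (simp add: laurent_def supp_def)

lemma laurent_add[intro]: "f \<in> laurent \<Longrightarrow> g \<in> laurent \<Longrightarrow> f + g \<in> laurent"
  unfolding laurent_iff supp_def
  by (rule finite_subset[of _ "{j. f j \<noteq> 0} \<union> {j. g j \<noteq> 0}"]) auto

lemma laurent_uminus[intro]: "f \<in> laurent \<Longrightarrow> - f \<in> laurent"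
  unfolding laurent_iff supp_def by simp

lemma laurent_diff[intro]: "f \<in> laurent \<Longrightarrow> g \<in> laurent \<Longrightarrow> f - g \<in> laurent"
  using laurent_add[of f "-g"] laurent_uminus[of g] by simp

lemma laurent_scale[intro]: "f \<in> laurent \<Longrightarrow> cscale c f \<in> laurent"
  unfolding laurent_iff supp_def cscale_def
  by (rule finite_subset[of _ "{j. f j \<noteq> 0}"]) auto

lemma laurent_zero[intro]: "0 \<in> laurent"
  unfolding laurent_iff supp_def by simp

lemma laurent_lmono[intro]: "lmono i \<in> laurent"
  unfolding laurent_iff supp_def lmono_def
  by (rule finite_subset[of _ "{i}"]) auto

lemma laurent_sum[intro]: "(\<And>x. x \<in> A \<Longrightarrow> f x \<in> laurent) \<Longrightarrow> sum f A \<in> laurent"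
  by (induction A rule: infinite_finite_induct) auto

lemma sum_fun_apply: "(sum f A) x = (\<Sum>a\<in>A. f a x)"
  by (induction A rule: infinite_finite_induct) auto

lemma laurent_expand:
  assumes "f \<in> laurent"
  shows "f = (\<Sum>t\<in>supp f. cscale (f t) (lmono t))"
proof
  fix x
  have "(\<Sum>t\<in>supp f. cscale (f t) (lmono t)) x = (\<Sum>t\<in>supp f. if t = x then f x else 0)"
    unfolding sum_fun_apply cscale_def lmono_def by (rule sum.cong) auto
  also have "\<dots> = f x" using assms by (subst sum.delta) (auto simp: laurent_iff supp_def)
  finally show "f x = (\<Sum>t\<in>supp f. cscale (f t) (lmono t)) x" by simp
qed

lemma laurent_bounded_below:
  assumes "f \<in> laurent"
  obtains m where "\<forall>t<m. f t = 0"
proof -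
  have fin: "finite (insert 0 (supp f))" using assms by (simp add: laurent_iff)
  have "f t = 0" if "t < Min (insert 0 (supp f))" for t
    using Min_le[OF fin, of t] that by (force simp: supp_def)
  then show ?thesis using that by blast
qed

section \<open>The functionals phi\<close>

text \<open>bc b n is the coefficient of z^n in (1+z)^b.\<close>
definition bc :: "complex \<Rightarrow> int \<Rightarrow> complex" where
  "bc b n = (if n \<ge> 0 then b gchoose nat n else 0)"

text \<open>phi b k f is the coefficient of z^k in f(z) (1+z)^b.\<close>
definition phi :: "complex \<Rightarrow> int \<Rightarrow> (int \<Rightarrow> complex) \<Rightarrow> complex" where
  "phi b k f = (\<Sum>j\<in>supp f. f j * bc b (k - j))"

lemma phi_superset:
  assumes "finite S" "supp f \<subseteq> S"
  shows "phi b k f = (\<Sum>j\<in>S. f j * bc b (k - j))"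
  unfolding phi_def
  by (rule sum.mono_neutral_left) (use assms in \<open>auto simp: supp_def\<close>)

lemma phi_add:
  assumes "f \<in> laurent" "g \<in> laurent"
  shows "phi b k (f + g) = phi b k f + phi b k g"
proof -
  let ?S = "supp f \<union> supp g"
  have fin: "finite ?S" using assms by (auto simp: laurent_iff)
  have "phi b k (f + g) = (\<Sum>j\<in>?S. (f + g) j * bc b (k - j))"
    by (rule phi_superset[OF fin]) (auto simp: supp_def)
  moreover have "phi b k f = (\<Sum>j\<in>?S. f j * bc b (k - j))"
    by (rule phi_superset[OF fin]) auto
  moreover have "phi b k g = (\<Sum>j\<in>?S. g j * bc b (k - j))"
    by (rule phi_superset[OF fin]) auto
  ultimately show ?thesis by (simp add: sum.distrib algebra_simps)
qed

lemma phi_scale: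
  assumes "f \<in> laurent"
  shows "phi b k (cscale c f) = c * phi b k f"
proof -
  have fin: "finite (supp f)" using assms by (auto simp: laurent_iff)
  have "phi b k (cscale c f) = (\<Sum>j\<in>supp f. cscale c f j * bc b (k - j))"
    by (rule phi_superset[OF fin]) (auto simp: supp_def cscale_def)
  then show ?thesis by (simp add: phi_def cscale_def sum_distrib_left algebra_simps)
qed

lemma phi_zero[simp]: "phi b k 0 = 0"
  by (simp add: phi_def supp_def)

lemma phi_diff:
  assumes "f \<in> laurent" "g \<in> laurent"
  shows "phi b k (f - g) = phi b k f - phi b k g"
proof -
  have "f - g = f + cscale (-1) g" by (simp add: cscale_def fun_eq_iff)
  then have "phi b k (f - g) = phi b k f + phi b k (cscale (-1) g)"
    using phi_add[OF assms(1) laurent_scale[OF assms(2)]] by metis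
  then show ?thesis using phi_scale[OF assms(2), of b k "-1"] by simp
qed

lemma phi_lmono: "phi b k (lmono i) = bc b (k - i)"
  by (subst phi_superset[of "{i}"]) (auto simp: supp_def lmono_def)

lemma phi_lowest:
  assumes "f \<in> laurent" "\<forall>t<m. f t = 0"
  shows "phi b m f = f m"
proof -
  have "phi b m f = (\<Sum>j\<in>supp f. if j = m then f m else 0)"
    unfolding phi_def
  proof (rule sum.cong)
    fix j assume "j \<in> supp f"
    then have "j \<ge> m" using assms(2) by (force simp: supp_def)
    then show "f j * bc b (m - j) = (if j = m then f m else 0)"
      by (auto simp: bc_def)
  qed simp
  also have "\<dots> = f m" using assms(1) by (subst sum.delta) (auto simp: laurent_iff supp_def)
  finally show ?thesis .
qed

section \<open>Characterisation of O(N,Q,q) by the functionals phi\<close>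

lemma Opoly_apply:
  "Opoly N Q q j t = (if q + j \<le> t \<and> t \<le> N then of_rat Q gchoose nat (t - q - j) else 0)"
proof -
  have "Opoly N Q q j t = (\<Sum>i\<in>{0..N - q - j}. (if i = t - q - j then of_rat Q gchoose nat i else 0))"
    unfolding Opoly_def sum_fun_apply cscale_def lmono_def
    by (rule sum.cong) auto
  also have "\<dots> = (if q + j \<le> t \<and> t \<le> N then of_rat Q gchoose nat (t - q - j) else 0)"
    by (subst sum.delta) auto
  finally show ?thesis .
qed

lemma laurent_Opoly[intro]: "Opoly N Q q j \<in> laurent"
  unfolding Opoly_def by (intro laurent_sum laurent_scale laurent_lmono)

text \<open>Vandermonde: (1+z)^(-Q) times the truncation of z^(q+j) (1+z)^Q has no coefficients
  strictly between q+j and N+1.\<close>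
lemma phi_Opoly:
  assumes "q + j < k" "k \<le> N"
  shows "phi (- of_rat Q) k (Opoly N Q q j) = 0"
proof -
  define a :: complex where "a = of_rat Q"
  define m where "m = nat (N - q - j)"
  define n where "n = nat (k - q - j)"
  have n0: "n > 0" "n \<le> m" using assms by (auto simp: n_def m_def)
  let ?g = "\<lambda>i::nat. q + j + int i"
  have inj: "inj_on ?g {0..m}" by (auto simp: inj_on_def)
  have "phi (- a) k (Opoly N Q q j) = (\<Sum>t\<in>?g ` {0..m}. Opoly N Q q j t * bc (- a) (k - t))"
  proof (rule phi_superset)
    show "supp (Opoly N Q q j) \<subseteq> ?g ` {0..m}"
    proof
      fix t assume "t \<in> supp (Opoly N Q q j)"
      then have "q + j \<le> t" "t \<le> N" by (auto simp: supp_def Opoly_apply split: if_splits)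
      then have "t = ?g (nat (t - q - j))" "nat (t - q - j) \<in> {0..m}" by (auto simp: m_def)
      then show "t \<in> ?g ` {0..m}" by blast
    qed
  qed auto
  also have "\<dots> = (\<Sum>i\<in>{0..m}. (a gchoose i) * bc (- a) (int n - int i))"
  proof -
    have e: "k - (q + j + int x) = int n - int x" for x using assms by (simp add: n_def)
    have l: "x \<le> m \<Longrightarrow> q + j + int x \<le> N" for x using assms by (simp add: m_def)
    show ?thesis
      by (subst sum.reindex[OF inj]) (use assms in \<open>auto simp: Opoly_apply a_def e l intro!: sum.cong\<close>)
  qed
  also have "\<dots> = (\<Sum>i\<in>{0..n}. (a gchoose i) * bc (- a) (int n - int i))"
    by (rule sum.mono_neutral_right) (use n0 in \<open>auto simp: bc_def\<close>)
  also have "\<dots> = (\<Sum>i\<in>{0..n}. (a gchoose i) * ((- a) gchoose (n - i)))"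
    by (rule sum.cong) (auto simp: bc_def nat_diff_distrib)
  also have "\<dots> = 0"
    using n0 by (subst gbinomial_Vandermonde) (cases n, auto)
  finally show ?thesis by (simp add: a_def)
qed

definition Ochar :: "int \<Rightarrow> rat \<Rightarrow> int \<Rightarrow> (int \<Rightarrow> complex) set" where
  "Ochar N Q q = {f \<in> laurent. \<forall>k. q < k \<and> k \<le> N \<longrightarrow> phi (- of_rat Q) k f = 0}"

lemma Ochar_diff: "f \<in> Ochar N Q q \<Longrightarrow> g \<in> Ochar N Q q \<Longrightarrow> f - g \<in> Ochar N Q q"
  by (auto simp: Ochar_def phi_diff)

lemma Ospace_sub_Ochar: "Ospace N Q q \<subseteq> Ochar N Q q"
proof
  fix f assume "f \<in> Ospace N Q q"
  then show "f \<in> Ochar N Q q"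
    unfolding Ospace_def
  proof (induction rule: M.span_induct)
    case base
    show ?case unfolding M.subspace_def
      by (auto simp: Ochar_def phi_add phi_scale)
  next
    case (step x)
    then show ?case
    proof
      assume "x \<in> {lmono i |i. N + 1 \<le> i}"
      then show ?thesis by (auto simp: Ochar_def phi_lmono bc_def)
    next
      assume "x \<in> {Opoly N Q q j |j. j \<le> 0}"
      then show ?thesis by (auto simp: Ochar_def intro!: phi_Opoly)
    qed
  qed
qed

lemma high_laurent_in_Ospace:
  assumes "f \<in> laurent" "\<forall>t\<le>N. f t = 0"
  shows "f \<in> Ospace N Q q"
proof -
  have "(\<Sum>t\<in>supp f. cscale (f t) (lmono t)) \<in> Ospace N Q q"
    unfolding Ospace_def
  proof (intro M.span_sum M.span_scale M.span_base)
    fix t assume "t \<in> supp f"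
    then have "\<not> t \<le> N" using assms(2) by (auto simp: supp_def)
    then show "lmono t \<in> {lmono i |i. N + 1 \<le> i} \<union> {Opoly N Q q j |j. j \<le> 0}" by auto
  qed
  then show ?thesis using laurent_expand[OF assms(1)] by simp
qed

text \<open>One reduction step: the lowest coefficient (at z^m, m \<le> N) of an element of Ochar can be
  removed by subtracting a multiple of a generator; for m > q it already vanishes.\<close>
lemma Ochar_peel:
  assumes f: "f \<in> Ochar N Q q" and low: "\<forall>t<m. f t = 0" and "m \<le> N"
  obtains g where "g \<in> Ospace N Q q" "f - g \<in> Ochar N Q q" "\<forall>t<m + 1. (f - g) t = 0"
proof (cases "m \<le> q")
  case True
  define g where "g = cscale (f m) (Opoly N Q q (m - q))"
  have "g \<in> Ospace N Q q"
    unfolding g_def Ospace_def using True by (intro M.span_scale M.span_base) auto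
  moreover have "f - g \<in> Ochar N Q q"
    using Ochar_diff[OF f] Ospace_sub_Ochar \<open>g \<in> Ospace N Q q\<close> by blast
  moreover have "\<forall>t<m + 1. (f - g) t = 0"
    using low \<open>m \<le> N\<close> by (auto simp: g_def cscale_def Opoly_apply)
  ultimately show ?thesis by (rule that)
next
  case False
  have "f m = phi (- of_rat Q) m f"
    using f low by (simp add: Ochar_def phi_lowest)
  also have "\<dots> = 0" using f False \<open>m \<le> N\<close> by (simp add: Ochar_def)
  finally have "f m = 0" .
  have "\<forall>t<m + 1. (f - 0) t = 0"
  proof (intro allI impI)
    fix t :: int assume "t < m + 1"
    then have "t < m \<or> t = m" by linarith
    then show "(f - 0) t = 0" using low \<open>f m = 0\<close> by auto
  qed
  then show ?thesis using that[of 0] f by (simp add: Ospace_def M.span_zero)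
qed

text \<open>Conversely, repeated peeling moves the lowest possibly nonzero exponent m up to N + 1,
  where the remainder is a combination of the monomial generators (induction on N + 1 - m).\<close>
lemma Ochar_sub_Ospace: "Ochar N Q q \<subseteq> Ospace N Q q"
proof
  fix f assume f: "f \<in> Ochar N Q q"
  have "f \<in> Ospace N Q q" if "nat (N + 1 - m) = d" "f \<in> Ochar N Q q" "\<forall>t<m. f t = 0" for d m f
    using that
  proof (induction d arbitrary: m f)
    case 0
    then show ?case by (intro high_laurent_in_Ospace) (auto simp: Ochar_def)
  next
    case (Suc d)
    have "m \<le> N" and d: "nat (N + 1 - (m + 1)) = d" using Suc.prems(1) by auto
    obtain g where g: "g \<in> Ospace N Q q" "f - g \<in> Ochar N Q q" "\<forall>t<m + 1. (f - g) t = 0"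
      using Ochar_peel[OF Suc.prems(2,3) \<open>m \<le> N\<close>] by blast
    have "f - g \<in> Ospace N Q q" using Suc.IH[OF d g(2,3)] .
    then have "(f - g) + g \<in> Ospace N Q q" using g(1) unfolding Ospace_def by (rule M.span_add)
    then show ?case by simp
  qed
  moreover obtain m where "\<forall>t<m. f t = 0"
    using f by (auto simp: Ochar_def elim: laurent_bounded_below)
  ultimately show "f \<in> Ospace N Q q" using f by blast
qed

theorem Ospace_char: "Ospace N Q q = Ochar N Q q"
  using Ospace_sub_Ochar Ochar_sub_Ospace by blast

section \<open>Linear independence of binomial series over polynomials\<close>

lemma fps_binomial_deriv:
  "(1 + fps_X) * fps_deriv (fps_binomial b) = fps_const b * fps_binomial (b :: complex)"
proof (rule fps_ext)
  fix n
  have a: "of_nat (Suc n) * (b gchoose Suc n) = (b - of_nat n) * (b gchoose n)"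
    by (metis gbinomial_absorb_comp gbinomial_absorption)
  have "fps_nth ((1 + fps_X) * fps_deriv (fps_binomial b)) n
        = fps_nth (fps_deriv (fps_binomial b)) n + fps_nth (fps_X * fps_deriv (fps_binomial b)) n"
    by (simp add: distrib_right)
  also have "\<dots> = (b - of_nat n) * (b gchoose n) + of_nat n * (b gchoose n)"
    using a by (cases n) (simp_all add: fps_X_mult_nth algebra_simps)
  also have "\<dots> = fps_nth (fps_const b * fps_binomial b) n" by (simp add: algebra_simps)
  finally show "fps_nth ((1 + fps_X) * fps_deriv (fps_binomial b)) n
      = fps_nth (fps_const b * fps_binomial b) n" .
qed

text \<open>The operator (1+z) d/dz - c maps B_b P to B_b (lower_op b c P).\<close>
definition lower_op :: "complex \<Rightarrow> complex \<Rightarrow> complex poly \<Rightarrow> complex poly" where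
  "lower_op b c P = smult (b - c) P + [:1,1:] * pderiv P"

lemma lower_op_fps:
  "(1 + fps_X) * fps_deriv (fps_binomial b * fps_of_poly P) - fps_const c * (fps_binomial b * fps_of_poly P)
   = fps_binomial b * fps_of_poly (lower_op b c P)"
proof -
  let ?B = "fps_binomial b" and ?P = "fps_of_poly P"
  have lin: "fps_of_poly [:1, 1::complex:] = 1 + fps_X"
    using fps_of_poly_linear'[of "1::complex"] by simp
  have "(1 + fps_X) * fps_deriv (?B * ?P) - fps_const c * (?B * ?P)
      = ?B * ((1 + fps_X) * fps_deriv ?P) + ((1 + fps_X) * fps_deriv ?B) * ?P - fps_const c * (?B * ?P)"
    by (simp add: algebra_simps)
  also have "\<dots> = ?B * ((1 + fps_X) * fps_deriv ?P) + fps_const b * ?B * ?P - fps_const c * (?B * ?P)"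
    by (simp add: fps_binomial_deriv)
  also have "\<dots> = ?B * (fps_const (b - c) * ?P + (1 + fps_X) * fps_deriv ?P)"
    by (simp del: fps_const_sub add: fps_const_sub[symmetric] algebra_simps)
  also have "\<dots> = ?B * fps_of_poly (lower_op b c P)"
    unfolding lower_op_def fps_of_poly_add fps_of_poly_mult lin fps_of_poly_pderiv
    by (simp add: fps_of_poly_smult)
  finally show ?thesis .
qed

lemma coeff_lower_op:
  "coeff (lower_op b c P) n = (b - c + of_nat n) * coeff P n + of_nat (Suc n) * coeff P (Suc n)"
proof -
  have "[:1,1::complex:] * pderiv P = pderiv P + pCons 0 (pderiv P)"
    by (simp add: mult_pCons_left)
  then show ?thesis
    by (cases n) (simp_all add: lower_op_def coeff_pderiv algebra_simps)
qed

lemma degree_lower_op: "degree (lower_op b c P) \<le> degree P"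
  by (rule degree_le) (auto simp: coeff_lower_op coeff_eq_0)

text \<open>The top coefficient of lower_op b c P is (b - c + deg P) times that of P: so it is
  nonzero unless c = b + deg P, and for that choice the degree drops.\<close>
lemma coeff_lower_op_degree:
  "coeff (lower_op b c P) (degree P) = (b - c + of_nat (degree P)) * lead_coeff P"
  by (simp add: coeff_lower_op coeff_eq_0)

lemma fps_binomial_nonzero: "fps_binomial (b :: complex) \<noteq> 0"
proof
  assume "fps_binomial b = 0"
  then have "fps_nth (fps_binomial b) 0 = 0" by simp
  then show False by simp
qed

definition poly_size :: "complex poly \<Rightarrow> nat" where
  "poly_size P = (if P = 0 then 0 else Suc (degree P))"

lemma poly_size_lower_op: "poly_size (lower_op b c P) \<le> poly_size P"
  using degree_lower_op[of b c P] by (auto simp: poly_size_def lower_op_def)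

lemma poly_size_lower_op_drops:
  assumes "P \<noteq> 0"
  shows "poly_size (lower_op b (b + of_nat (degree P)) P) < poly_size P"
proof (cases "lower_op b (b + of_nat (degree P)) P = 0")
  case False
  have "coeff (lower_op b (b + of_nat (degree P)) P) (degree P) = 0"
    by (simp add: coeff_lower_op_degree)
  then have "degree (lower_op b (b + of_nat (degree P)) P) \<noteq> degree P"
    using False by (metis leading_coeff_0_iff)
  moreover have "degree (lower_op b (b + of_nat (degree P)) P) \<le> degree P"
    by (rule degree_lower_op)
  ultimately show ?thesis using False assms by (simp add: poly_size_def)
qed (use assms in \<open>simp add: poly_size_def\<close>)

lemma lower_op_nonzero:
  assumes "P \<noteq> 0" "b - c + of_nat (degree P) \<noteq> 0"
  shows "lower_op b c P \<noteq> 0"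
proof
  assume "lower_op b c P = 0"
  then have "(b - c + of_nat (degree P)) * lead_coeff P = 0"
    by (metis coeff_0 coeff_lower_op_degree)
  then show False using assms by simp
qed

lemma lower_op_sum:
  "(\<Sum>s\<in>S. fps_binomial (b s) * fps_of_poly (lower_op (b s) c (P s)))
   = (1 + fps_X) * fps_deriv (\<Sum>s\<in>S. fps_binomial (b s) * fps_of_poly (P s))
     - fps_const c * (\<Sum>s\<in>S. fps_binomial (b s) * fps_of_poly (P s))"
  unfolding fps_deriv_sum sum_distrib_left sum_subtractf[symmetric]
  by (intro sum.cong refl) (simp only: lower_op_fps)

text \<open>Induction on the total size: if
  two coefficients P_s1, P_s2 are nonzero, the operator with c = b_s1 + deg P_s1 preserves
  the relation, lowers the size of P_s1 and keeps P_s2 nonzero; a single nonzero term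
  B_b P cannot vanish.\<close>
lemma fps_binomial_independent:
  fixes P :: "'s \<Rightarrow> complex poly" and b :: "'s \<Rightarrow> complex"
  assumes "finite S" and distinct: "\<forall>s\<in>S. \<forall>t\<in>S. s \<noteq> t \<longrightarrow> b s - b t \<notin> \<int>"
    and "(\<Sum>s\<in>S. fps_binomial (b s) * fps_of_poly (P s)) = 0"
  shows "\<forall>s\<in>S. P s = 0"
  using assms(3)
proof (induction P rule: measure_induct_rule[where f = "\<lambda>P. \<Sum>s\<in>S. poly_size (P s)"])
  case (less P)
  show ?case
  proof (rule ccontr)
    assume "\<not> (\<forall>s\<in>S. P s = 0)"
    then obtain s1 where s1: "s1 \<in> S" "P s1 \<noteq> 0" by blast
    obtain s2 where s2: "s2 \<in> S" "s2 \<noteq> s1" "P s2 \<noteq> 0"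
    proof (rule ccontr)
      assume "\<not> thesis"
      then have others: "\<forall>s\<in>S - {s1}. P s = 0" using that by auto
      have "(\<Sum>s\<in>S. fps_binomial (b s) * fps_of_poly (P s))
          = fps_binomial (b s1) * fps_of_poly (P s1)
            + (\<Sum>s\<in>S - {s1}. fps_binomial (b s) * fps_of_poly (P s))"
        by (rule sum.remove[OF assms(1) s1(1)])
      also have "(\<Sum>s\<in>S - {s1}. fps_binomial (b s) * fps_of_poly (P s)) = 0"
        using others by (intro sum.neutral) simp
      finally show False using less.prems s1(2) by (simp add: fps_binomial_nonzero)
    qed
    define c where "c = b s1 + of_nat (degree (P s1))"
    define P' where "P' s = lower_op (b s) c (P s)" for s
    have sum0': "(\<Sum>s\<in>S. fps_binomial (b s) * fps_of_poly (P' s)) = 0"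
      using lower_op_sum[of b c P S] less.prems by (simp add: P'_def)
    have "(\<Sum>s\<in>S. poly_size (P' s)) < (\<Sum>s\<in>S. poly_size (P s))"
    proof (rule sum_strict_mono_ex1[OF assms(1)])
      show "\<forall>s\<in>S. poly_size (P' s) \<le> poly_size (P s)"
        by (simp add: P'_def poly_size_lower_op)
      show "\<exists>s\<in>S. poly_size (P' s) < poly_size (P s)"
        using s1 poly_size_lower_op_drops[OF s1(2)] by (auto simp: P'_def c_def)
    qed
    with less.IH sum0' have "P' s2 = 0" using s2(1) by blast
    moreover have "b s2 - c + of_nat (degree (P s2)) \<noteq> 0"
    proof
      assume "b s2 - c + of_nat (degree (P s2)) = 0"
      then have "b s2 - b s1 = of_int (int (degree (P s1)) - int (degree (P s2)))"
        by (simp add: c_def algebra_simps)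
      then have "b s2 - b s1 \<in> \<int>" by simp
      then show False using distinct s1(1) s2(1,2) by blast
    qed
    ultimately show False using lower_op_nonzero s2(3) by (simp add: P'_def)
  qed
qed

lemma nth_binom_poly:
  fixes b :: complex and a :: "int \<Rightarrow> complex" and K :: "int set"
  assumes "finite K" "\<forall>k\<in>K. k \<le> N"
  shows "fps_nth (fps_binomial b * fps_of_poly (\<Sum>k\<in>K. monom (a k) (nat (N - k)))) n
       = (\<Sum>k\<in>K. a k * bc b (k - (N - int n)))"
proof -
  have "fps_binomial b * fps_of_poly (\<Sum>k\<in>K. monom (a k) (nat (N - k)))
      = (\<Sum>k\<in>K. (fps_const (a k) * fps_binomial b) * fps_X ^ nat (N - k))"
    by (simp add: fps_of_poly_sum fps_of_poly_monom sum_distrib_left algebra_simps)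
  then have "fps_nth (fps_binomial b * fps_of_poly (\<Sum>k\<in>K. monom (a k) (nat (N - k)))) n
      = (\<Sum>k\<in>K. fps_nth ((fps_const (a k) * fps_binomial b) * fps_X ^ nat (N - k)) n)"
    by (simp add: fps_sum_nth)
  also have "\<dots> = (\<Sum>k\<in>K. a k * bc b (k - (N - int n)))"
  proof (rule sum.cong[OF refl])
    fix k assume "k \<in> K"
    then have kN: "k \<le> N" using assms(2) by blast
    show "fps_nth ((fps_const (a k) * fps_binomial b) * fps_X ^ nat (N - k)) n = a k * bc b (k - (N - int n))"
    proof (cases "nat (N - k) \<le> n")
      case True
      then have "nat (k - (N - int n)) = n - nat (N - k)" using kN by linarith
      then show ?thesis using True kN by (simp add: fps_X_power_mult_right_nth bc_def)
    next
      case False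
      then show ?thesis using kN by (simp add: fps_X_power_mult_right_nth bc_def)
    qed
  qed
  finally show ?thesis .
qed

text \<open>Consequently the functionals f \<mapsto> phi (b s) k f (s \<in> S, q s < k \<le> N) are linearly
  independent, already on the monomials: a linear relation among their values on all z^j is
  exactly a relation sum_s B_(b s) P_s = 0 with P_s = sum_k a(s,k) X^(N-k).\<close>
lemma binomial_functionals_independent:
  fixes b :: "'s \<Rightarrow> complex" and a :: "'s \<times> int \<Rightarrow> complex"
  assumes "finite S" "\<forall>s\<in>S. \<forall>t\<in>S. s \<noteq> t \<longrightarrow> b s - b t \<notin> \<int>"
    and ann: "\<And>j. (\<Sum>x\<in>(SIGMA s:S. {q s<..N}). a x * bc (b (fst x)) (snd x - j)) = 0"
  shows "\<forall>x\<in>(SIGMA s:S. {q s<..N}). a x = 0"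
proof -
  define P where "P s = (\<Sum>k\<in>{q s<..N}. monom (a (s, k)) (nat (N - k)))" for s
  have "(\<Sum>s\<in>S. fps_binomial (b s) * fps_of_poly (P s)) = 0"
  proof (rule fps_ext)
    fix n
    have "fps_nth (\<Sum>s\<in>S. fps_binomial (b s) * fps_of_poly (P s)) n
        = (\<Sum>s\<in>S. \<Sum>k\<in>{q s<..N}. a (s, k) * bc (b s) (k - (N - int n)))"
      unfolding fps_sum_nth P_def by (intro sum.cong refl nth_binom_poly) auto
    also have "\<dots> = (\<Sum>x\<in>(SIGMA s:S. {q s<..N}). a x * bc (b (fst x)) (snd x - (N - int n)))"
      using assms(1) by (subst sum.Sigma) (auto simp: split_def)
    also have "\<dots> = 0" by (rule ann)
    finally show "fps_nth (\<Sum>s\<in>S. fps_binomial (b s) * fps_of_poly (P s)) n = fps_nth 0 n" by simp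
  qed
  then have P0: "\<forall>s\<in>S. P s = 0" using fps_binomial_independent assms(1,2) by blast
  show ?thesis
  proof
    fix x assume "x \<in> (SIGMA s:S. {q s<..N})"
    then obtain s k where x: "x = (s, k)" "s \<in> S" "q s < k" "k \<le> N" by auto
    have "coeff (P s) (nat (N - k)) = (\<Sum>k'\<in>{q s<..N}. if k' = k then a (s, k') else 0)"
      unfolding P_def coeff_sum coeff_monom by (rule sum.cong) (use x in auto)
    also have "\<dots> = a (s, k)" using x by (subst sum.delta) auto
    finally show "a x = 0" using P0 x by simp
  qed
qed

section \<open>Simultaneous approximation\<close>

lemma exists_unit_at:
  fixes U :: "('a \<Rightarrow> 'k::field) set"
  assumes "finite A" "x0 \<in> A"
    and scale: "\<And>c u. u \<in> U \<Longrightarrow> (\<lambda>x. c * u x) \<in> U"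
    and nondeg: "\<And>a. \<forall>u\<in>U. (\<Sum>x\<in>A. a x * u x) = 0 \<Longrightarrow> \<forall>x\<in>A. a x = 0"
  shows "\<exists>w\<in>U. w x0 = 1"
proof -
  have "\<exists>u\<in>U. u x0 \<noteq> 0"
  proof (rule ccontr)
    assume "\<not> (\<exists>u\<in>U. u x0 \<noteq> 0)"
    moreover have "(\<Sum>x\<in>A. (if x = x0 then 1 else 0) * u x) = u x0" for u :: "'a \<Rightarrow> 'k"
    proof -
      have "(\<Sum>x\<in>A. (if x = x0 then 1 else 0) * u x) = (\<Sum>x\<in>A. if x = x0 then u x else 0)"
        by (rule sum.cong) auto
      then show ?thesis using assms(1,2) by simp
    qed
    ultimately have "\<forall>x\<in>A. (if x = x0 then 1 else 0) = (0 :: 'k)" by (intro nondeg) simp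
    then show False using assms(2) by auto
  qed
  then obtain u where u: "u \<in> U" "u x0 \<noteq> 0" by blast
  have one: "inverse (u x0) * u x0 = 1" using u(2) by simp
  have "(\<lambda>x. inverse (u x0) * u x) \<in> U" by (rule scale[OF u(1)])
  with one show ?thesis by (rule bexI[where x="\<lambda>x. inverse (u x0) * u x"])
qed

lemma annihilator_extend:
  fixes U :: "('a \<Rightarrow> 'k::field) set"
  assumes "finite A" "x0 \<notin> A" and w: "w \<in> U" "w x0 = 1"
    and add: "\<And>u v. u \<in> U \<Longrightarrow> v \<in> U \<Longrightarrow> (\<lambda>x. u x + v x) \<in> U"
    and scale: "\<And>c u. u \<in> U \<Longrightarrow> (\<lambda>x. c * u x) \<in> U"
    and ann: "\<forall>u\<in>{u \<in> U. u x0 = 0}. (\<Sum>x\<in>A. a x * u x) = 0"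
    and u: "u \<in> U"
  shows "(\<Sum>x\<in>insert x0 A. (a(x0 := - (\<Sum>x\<in>A. a x * w x))) x * u x) = 0"
proof -
  let ?u' = "\<lambda>x. u x + (- u x0) * w x"
  have "?u' \<in> U" by (rule add[OF u scale[OF w(1), of "- u x0"]])
  then have "?u' \<in> {u \<in> U. u x0 = 0}" using w(2) by simp
  from bspec[OF ann this] have "(\<Sum>x\<in>A. a x * ?u' x) = 0" by simp
  then have e: "(\<Sum>x\<in>A. a x * u x) = u x0 * (\<Sum>x\<in>A. a x * w x)"
    by (simp add: algebra_simps sum_distrib_left sum_subtractf)
  have "(\<Sum>x\<in>A. (a(x0 := - (\<Sum>x\<in>A. a x * w x))) x * u x) = (\<Sum>x\<in>A. a x * u x)"
    using assms(2) by (intro sum.cong) auto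
  then show ?thesis using assms(1,2) e by simp
qed

text \<open>Induction on A: subtract a
  multiple of a function w with w x0 = 1 and pass to the functions in U vanishing at x0.\<close>
lemma restrictions_onto:
  fixes U :: "('a \<Rightarrow> 'k::field) set"
  assumes "finite A" "(\<lambda>x. 0) \<in> U"
    and "\<And>u v. u \<in> U \<Longrightarrow> v \<in> U \<Longrightarrow> (\<lambda>x. u x + v x) \<in> U"
    and "\<And>c u. u \<in> U \<Longrightarrow> (\<lambda>x. c * u x) \<in> U"
    and "\<And>a. \<forall>u\<in>U. (\<Sum>x\<in>A. a x * u x) = 0 \<Longrightarrow> \<forall>x\<in>A. a x = 0"
  shows "\<exists>u\<in>U. \<forall>x\<in>A. u x = v x"
  using assms
proof (induction A arbitrary: U v rule: finite_induct)
  case empty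
  show ?case using empty.prems(1) by blast
next
  case (insert x0 A U v)
  note add = insert.prems(2) and scale = insert.prems(3) and nondeg = insert.prems(4)
  have "finite (insert x0 A)" using insert.hyps(1) by simp
  then obtain w where w: "w \<in> U" "w x0 = 1"
    using exists_unit_at[OF _ insertI1 scale nondeg] by blast
  define U' where "U' = {u \<in> U. u x0 = 0}"
  have "\<exists>u\<in>U'. \<forall>x\<in>A. u x = v x - v x0 * w x"
  proof (rule insert.IH)
    show "(\<lambda>x. 0) \<in> U'" using insert.prems(1) by (simp add: U'_def)
    show "(\<lambda>x. u x + v x) \<in> U'" if "u \<in> U'" "v \<in> U'" for u v
      using add[of u v] that by (simp add: U'_def)
    show "(\<lambda>x. c * u x) \<in> U'" if "u \<in> U'" for c u
      using scale[of u c] that by (simp add: U'_def)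
    show "\<forall>x\<in>A. a x = 0" if ann: "\<forall>u\<in>U'. (\<Sum>x\<in>A. a x * u x) = 0" for a
    proof -
      define a' where "a' = a(x0 := - (\<Sum>x\<in>A. a x * w x))"
      have "\<forall>u\<in>U. (\<Sum>x\<in>insert x0 A. a' x * u x) = 0"
        unfolding a'_def
        using annihilator_extend[OF insert.hyps(1,2) w add scale ann[unfolded U'_def]] by blast
      then have "\<forall>x\<in>insert x0 A. a' x = 0" by (rule nondeg)
      then show ?thesis using insert.hyps(2) by (auto simp: a'_def split: if_splits)
    qed
  qed
  then obtain u' where u': "u' \<in> U'" "\<forall>x\<in>A. u' x = v x - v x0 * w x" by blast
  have "u' \<in> U" using u'(1) by (simp add: U'_def)
  then have "(\<lambda>x. u' x + v x0 * w x) \<in> U" by (rule add[OF _ scale[OF w(1)]])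
  moreover have "\<forall>x\<in>insert x0 A. u' x + v x0 * w x = v x"
    using u' w by (auto simp: U'_def)
  ultimately show ?case by (rule bexI[where x="\<lambda>x. u' x + v x0 * w x", rotated])
qed

lemma of_rat_in_Ints_iff: "(of_rat r :: 'a::field_char_0) \<in> \<int> \<longleftrightarrow> r \<in> \<int>"
proof
  assume "(of_rat r :: 'a) \<in> \<int>"
  then obtain n where "(of_rat r :: 'a) = of_int n" by (elim Ints_cases)
  then have "(of_rat r :: 'a) = of_rat (of_int n)" by simp
  then have "r = of_int n" by (simp only: of_rat_eq_iff)
  then show "r \<in> \<int>" by simp
next
  assume "r \<in> \<int>"
  then obtain n where "r = of_int n" by (elim Ints_cases)
  then show "(of_rat r :: 'a) \<in> \<int>" by simp
qed

text \<open>By the characterisation this asks for prescribed values of the functionals phi (-Q_s) k,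
  which are independent.\<close>
theorem Ospace_simultaneous_approx:
  fixes S :: "'s set" and Q :: "'s \<Rightarrow> rat" and q :: "'s \<Rightarrow> int"
    and h :: "'s \<Rightarrow> int \<Rightarrow> complex"
  assumes "finite S" and distinct: "\<forall>s\<in>S. \<forall>t\<in>S. s \<noteq> t \<longrightarrow> Q s - Q t \<notin> \<int>"
    and h: "\<And>s. s \<in> S \<Longrightarrow> h s \<in> laurent"
  shows "\<exists>x\<in>laurent. \<forall>s\<in>S. x - h s \<in> Ospace N (Q s) (q s)"
proof -
  define b where "b s = - (of_rat (Q s) :: complex)" for s
  define A where "A = (SIGMA s:S. {q s<..N})"
  define Phi where "Phi f = (\<lambda>x. phi (b (fst x)) (snd x) f)" for f
  have b_distinct: "\<forall>s\<in>S. \<forall>t\<in>S. s \<noteq> t \<longrightarrow> b s - b t \<notin> \<int>"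
  proof (intro ballI impI)
    fix s t assume "s \<in> S" "t \<in> S" "s \<noteq> t"
    then have "Q t - Q s \<notin> \<int>" using distinct by (simp add: eq_commute)
    moreover have "b s - b t = of_rat (Q t - Q s)" by (simp add: b_def of_rat_diff)
    ultimately show "b s - b t \<notin> \<int>" by (simp add: of_rat_in_Ints_iff)
  qed
  have "\<exists>u\<in>Phi ` laurent. \<forall>x\<in>A. u x = phi (b (fst x)) (snd x) (h (fst x))"
  proof (rule restrictions_onto)
    show "finite A" unfolding A_def using assms(1) by auto
    show "(\<lambda>x. 0) \<in> Phi ` laurent"
      by (rule image_eqI[where x=0]) (auto simp: Phi_def)
    show "(\<lambda>x. u x + v x) \<in> Phi ` laurent" if uv: "u \<in> Phi ` laurent" "v \<in> Phi ` laurent" for u v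
    proof -
      obtain f where f: "u = Phi f" "f \<in> laurent" using uv(1) by (rule imageE)
      obtain g where g: "v = Phi g" "g \<in> laurent" using uv(2) by (rule imageE)
      have "(\<lambda>x. u x + v x) = Phi (f + g)" using f g by (simp add: Phi_def phi_add)
      moreover have "f + g \<in> laurent" using f(2) g(2) by (rule laurent_add)
      ultimately show ?thesis by (rule image_eqI)
    qed
    show "(\<lambda>x. c * u x) \<in> Phi ` laurent" if u: "u \<in> Phi ` laurent" for c u
    proof -
      obtain f where f: "u = Phi f" "f \<in> laurent" using u by (rule imageE)
      have "(\<lambda>x. c * u x) = Phi (cscale c f)" using f by (simp add: Phi_def phi_scale)
      moreover have "cscale c f \<in> laurent" using f(2) by (rule laurent_scale)
      ultimately show ?thesis by (rule image_eqI)
    qed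
    show "\<forall>x\<in>A. a x = 0" if ann: "\<forall>u\<in>Phi ` laurent. (\<Sum>x\<in>A. a x * u x) = 0" for a
    proof -
      have "(\<Sum>x\<in>A. a x * bc (b (fst x)) (snd x - j)) = 0" for j
        using bspec[OF ann imageI[OF laurent_lmono[of j]]] by (simp add: Phi_def phi_lmono)
      then show ?thesis
        unfolding A_def by (rule binomial_functionals_independent[OF assms(1) b_distinct])
    qed
  qed
  then obtain x where x: "x \<in> laurent"
    and match: "\<And>s k. s \<in> S \<Longrightarrow> q s < k \<Longrightarrow> k \<le> N \<Longrightarrow> phi (b s) k x = phi (b s) k (h s)"
    by (auto simp: A_def Phi_def)
  have "x - h s \<in> Ospace N (Q s) (q s)" if "s \<in> S" for s
    unfolding Ospace_char Ochar_def
    using x h[OF that] match[OF that] by (auto simp: phi_diff b_def)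
  then show ?thesis using x by blast
qed

section \<open>Quotients by an intersection of subgroups\<close>

definition add_subgroup :: "'a::ab_group_add set \<Rightarrow> bool" where
  "add_subgroup W \<longleftrightarrow> 0 \<in> W \<and> (\<forall>f\<in>W. \<forall>g\<in>W. f - g \<in> W)"

lemma add_subgroup_uminus: "add_subgroup W \<Longrightarrow> g \<in> W \<Longrightarrow> - g \<in> W"
  unfolding add_subgroup_def by (metis diff_0)

lemma add_subgroup_add:
  assumes "add_subgroup W" "f \<in> W" "g \<in> W"
  shows "f + g \<in> W"
  using assms add_subgroup_uminus[OF assms(1,3)] unfolding add_subgroup_def
  by (metis diff_minus_eq_add)

lemma add_subgroup_INT: "(\<And>s. s \<in> S \<Longrightarrow> add_subgroup (W s)) \<Longrightarrow> add_subgroup (\<Inter>s\<in>S. W s)"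
  by (auto simp: add_subgroup_def)

lemma add_subgroup_Ospace: "add_subgroup (Ospace N Q q)"
  unfolding add_subgroup_def Ospace_def by (auto intro: M.span_zero M.span_diff)

lemma coset_eq_iff:
  assumes "add_subgroup W"
  shows "coset W h = coset W h' \<longleftrightarrow> h - h' \<in> W"
proof
  assume "coset W h = coset W h'"
  moreover have "h + 0 \<in> coset W h" using assms by (auto simp: coset_def add_subgroup_def)
  ultimately obtain g where "g \<in> W" "h = h' + g" by (auto simp: coset_def)
  then show "h - h' \<in> W" by simp
next
  have sub: "coset W h \<subseteq> coset W h'" if "h - h' \<in> W" for h h'
  proof
    fix x assume "x \<in> coset W h"
    then obtain g where g: "g \<in> W" "x = h + g" by (auto simp: coset_def)
    then have "x = h' + ((h - h') + g)" by (simp add: algebra_simps)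
    moreover have "(h - h') + g \<in> W" using add_subgroup_add[OF assms that g(1)] .
    ultimately show "x \<in> coset W h'" unfolding coset_def by blast
  qed
  assume d: "h - h' \<in> W"
  then have "h' - h \<in> W" using add_subgroup_uminus[OF assms d] by simp
  then show "coset W h = coset W h'" using sub d by blast
qed

lemma coset_sum_image:
  assumes "add_subgroup I" "add_subgroup W" "I \<subseteq> W"
  shows "{f + g | f g. f \<in> coset I h \<and> g \<in> W} = coset W h"
proof
  show "{f + g | f g. f \<in> coset I h \<and> g \<in> W} \<subseteq> coset W h"
  proof
    fix x assume "x \<in> {f + g | f g. f \<in> coset I h \<and> g \<in> W}"
    then obtain i g where ig: "i \<in> I" "g \<in> W" "x = (h + i) + g" by (auto simp: coset_def)
    have "i + g \<in> W" using add_subgroup_add[OF assms(2)] ig(1,2) assms(3) by blast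
    moreover have "x = h + (i + g)" using ig(3) by (simp add: algebra_simps)
    ultimately show "x \<in> coset W h" by (auto simp: coset_def)
  qed
  show "coset W h \<subseteq> {f + g | f g. f \<in> coset I h \<and> g \<in> W}"
  proof
    fix x assume "x \<in> coset W h"
    then obtain g where g: "g \<in> W" "x = h + g" by (auto simp: coset_def)
    have "h + 0 \<in> coset I h" using assms(1) by (auto simp: coset_def add_subgroup_def)
    then show "x \<in> {f + g | f g. f \<in> coset I h \<and> g \<in> W}" using g by force
  qed
qed

lemma coset_family_onto:
  fixes W :: "'i \<Rightarrow> (int \<Rightarrow> complex) set"
  assumes sub: "\<And>s. s \<in> S \<Longrightarrow> add_subgroup (W s)"
    and approx: "\<And>h. (\<And>s. s \<in> S \<Longrightarrow> h s \<in> V) \<Longrightarrow> \<exists>x\<in>V. \<forall>s\<in>S. x - h s \<in> W s"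
    and Y: "Y \<in> Pi\<^sub>E S (\<lambda>s. quot V (W s))"
  shows "\<exists>x\<in>V. Y = restrict (\<lambda>s. coset (W s) x) S"
proof -
  have "\<forall>s\<in>S. \<exists>h. h \<in> V \<and> Y s = coset (W s) h" using Y by (auto simp: quot_def PiE_iff)
  from bchoice[OF this] obtain h where h: "\<forall>s\<in>S. h s \<in> V \<and> Y s = coset (W s) (h s)"
    by blast
  have "\<exists>x\<in>V. \<forall>s\<in>S. x - h s \<in> W s" using h by (intro approx) blast
  then obtain x where x: "x \<in> V" "\<forall>s\<in>S. x - h s \<in> W s" by blast
  have "Y s = restrict (\<lambda>s. coset (W s) x) S s" for s
  proof (cases "s \<in> S")
    case True
    then have "coset (W s) x = coset (W s) (h s)" using x(2) coset_eq_iff[OF sub[OF True]] by blast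
    then show ?thesis using h True by simp
  next
    case False
    then show ?thesis using PiE_arb[OF Y False] by simp
  qed
  then have "Y = restrict (\<lambda>s. coset (W s) x) S" by (rule ext)
  then show ?thesis using x(1) by blast
qed

theorem quot_diagonal_bij:
  fixes W :: "'i \<Rightarrow> (int \<Rightarrow> complex) set"
  assumes sub: "\<And>s. s \<in> S \<Longrightarrow> add_subgroup (W s)"
    and approx: "\<And>h. (\<And>s. s \<in> S \<Longrightarrow> h s \<in> V) \<Longrightarrow> \<exists>x\<in>V. \<forall>s\<in>S. x - h s \<in> W s"
  shows "bij_betw (\<lambda>C. restrict (\<lambda>s. {f + g | f g. f \<in> C \<and> g \<in> W s}) S)
           (quot V (\<Inter>s\<in>S. W s)) (Pi\<^sub>E S (\<lambda>s. quot V (W s)))"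
proof -
  define I where "I = (\<Inter>s\<in>S. W s)"
  define F where "F C = restrict (\<lambda>s. {f + g | f g. f \<in> C \<and> g \<in> W s}) S" for C
  have I: "add_subgroup I" unfolding I_def by (rule add_subgroup_INT[OF sub])
  have F_coset: "F (coset I h) = restrict (\<lambda>s. coset (W s) h) S" for h
  proof -
    have "I \<subseteq> W s" if "s \<in> S" for s using that by (auto simp: I_def)
    then show ?thesis unfolding F_def by (intro restrict_ext coset_sum_image[OF I sub])
  qed
  have "inj_on F (quot V I)"
  proof (rule inj_onI)
    fix C1 C2 assume "C1 \<in> quot V I" "C2 \<in> quot V I" and eq: "F C1 = F C2"
    then obtain h1 h2 where h: "C1 = coset I h1" "C2 = coset I h2" by (auto simp: quot_def)
    have "h1 - h2 \<in> W s" if "s \<in> S" for s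
      using fun_cong[OF eq, of s] that coset_eq_iff[OF sub[OF that]] by (simp add: h F_coset)
    then show "C1 = C2" unfolding h coset_eq_iff[OF I] by (simp add: I_def)
  qed
  moreover have "Pi\<^sub>E S (\<lambda>s. quot V (W s)) \<subseteq> F ` quot V I"
  proof
    fix Y assume "Y \<in> Pi\<^sub>E S (\<lambda>s. quot V (W s))"
    then obtain x where "x \<in> V" "Y = restrict (\<lambda>s. coset (W s) x) S"
      using coset_family_onto[OF sub approx] by blast
    then have "x \<in> V" "Y = F (coset I x)" by (simp_all add: F_coset)
    then show "Y \<in> F ` quot V I" by (auto simp: quot_def)
  qed
  moreover have "F ` quot V I \<subseteq> Pi\<^sub>E S (\<lambda>s. quot V (W s))"
    by (auto simp: quot_def F_coset)
  ultimately show ?thesis unfolding bij_betw_def F_def I_def by blast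
qed

text \<open>The diagonal map is a bijection onto the product of the quotients.\<close>
theorem mainTheorem5:
  fixes T :: nat and N :: int and q :: "nat \<Rightarrow> int" and Q :: "nat \<Rightarrow> rat"
  assumes "T > 0"
    and "\<forall>i<T. \<forall>j<T. i \<noteq> j \<longrightarrow> Q i - Q j \<notin> \<int>"
  shows "bij_betw
     (\<lambda>C. restrict (\<lambda>s. {f + g | f g. f \<in> C \<and> g \<in> Ospace N (Q s) (q s)}) {..<T})
     (quot laurent (\<Inter>s<T. Ospace N (Q s) (q s)))
     (Pi\<^sub>E {..<T} (\<lambda>s. quot laurent (Ospace N (Q s) (q s))))"
proof (rule quot_diagonal_bij)
  show "add_subgroup (Ospace N (Q s) (q s))" for s
    by (rule add_subgroup_Ospace)
  show "\<exists>x\<in>laurent. \<forall>s\<in>{..<T}. x - h s \<in> Ospace N (Q s) (q s)"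
    if "\<And>s. s \<in> {..<T} \<Longrightarrow> h s \<in> laurent" for h
    using Ospace_simultaneous_approx[of "{..<T}" Q h N q] assms(2) that by auto
qed

end
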